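(* Let $a,b,c>0$ and let $\lambda_0>0>\lambda_1$, $\lambda_2>0$ be the three real roots of $p_3(\lambda)=\lambda^3-b\lambda^2-(a+c)\lambda+cb$, labeled so that $\lambda_0\in(\max(b,\sqrt c),\infty)$, $\lambda_1\in(-\infty,-\sqrt c)$, $\lambda_2\in(0,\min(b,\sqrt c))$. Set $d_0^\pm=\lambda_1\pm\lambda_2$, $d_1^\pm=\lambda_0\pm\lambda_2$, $d_2^\pm=\lambda_0\pm\lambda_1$. For $L\ge0$ define the $2\times2$ matrix $C^0=(c_{ij})$ by $$c_{11}=\sum_{k=0}^2(-1)^k\lambda_k^2\frac{d_k^-}{d_k^+}e^{\lambda_kL},\quad c_{12}=\sum_{k=0}^2(-1)^k\lambda_k d_k^-e^{\lambda_kL},$$ $$c_{21}=\sum_{k=0}^2(-1)^k(a+b\lambda_k)d_k^-e^{\lambda_kL},\quad c_{22}=\sum_{k=0}^2(-1)^k\frac{a+b\lambda_k}{\lambda_k}d_k^-d_k^+e^{\lambda_kL}.$$ Then $\det(C^0)>0$ for all $L\ge0$; in particular $C^0$ is regular, so the linear system $C^0 s=\mathbf b$ with $\mathbf b=(0,-\gamma a d_0^-d_1^-d_2^-/c)^T$ has a unique solution $s=(s_1,s_2)^T$ for every $\gamma\in\mathbb R$.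
   Context: In the paper this system determines the shooting parameters $s_1=T_f'(0)$, $s_2=T_s'(0)$ of a two-temperature boundary value problem; $\gamma$ is a real parameter. *)

theory Defs
  imports "HOL-Analysis.Analysis"
begin

definition p3 :: "real \<Rightarrow> real \<Rightarrow> real \<Rightarrow> real \<Rightarrow> real" where
  "p3 a b c x = x^3 - b * x^2 - (a + c) * x + c * b"

definition dminus :: "(nat \<Rightarrow> real) \<Rightarrow> nat \<Rightarrow> real" where
  "dminus lam k = (if k = 0 then lam 1 - lam 2 else if k = 1 then lam 0 - lam 2 else lam 0 - lam 1)"

definition dplus :: "(nat \<Rightarrow> real) \<Rightarrow> nat \<Rightarrow> real" where
  "dplus lam k = (if k = 0 then lam 1 + lam 2 else if k = 1 then lam 0 + lam 2 else lam 0 + lam 1)"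

definition C0 :: "real \<Rightarrow> real \<Rightarrow> (nat \<Rightarrow> real) \<Rightarrow> real \<Rightarrow> real^2^2" where
  "C0 a b lam L = vector [
     vector [ (\<Sum>k=0..2. (-1)^k * (lam k)^2 * (dminus lam k / dplus lam k) * exp (lam k * L)),
              (\<Sum>k=0..2. (-1)^k * lam k * dminus lam k * exp (lam k * L)) ],
     vector [ (\<Sum>k=0..2. (-1)^k * (a + b * lam k) * dminus lam k * exp (lam k * L)),
              (\<Sum>k=0..2. (-1)^k * ((a + b * lam k) / lam k) * dminus lam k * dplus lam k * exp (lam k * L)) ]]"

definition rhs :: "real \<Rightarrow> real \<Rightarrow> (nat \<Rightarrow> real) \<Rightarrow> real \<Rightarrow> real^2" where
  "rhs a c lam \<gamma> = vector [0, - \<gamma> * a * dminus lam 0 * dminus lam 1 * dminus lam 2 / c]"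

end

theory Submission
  imports Defs
begin

(* Write every entry of C0 as a sum over the three roots with weights
   alpha_k = (-1)^k d_k^- e^(lam_k L). By bilinearity det C0 is a sum over pairs {i, j} of
   alpha_i alpha_j times a mixed 2x2 minor, and with Vieta (lam_0 + lam_1 + lam_2 = b,
   lam_0 lam_1 lam_2 = -c b) and p3 (lam_m) = 0 for the third root m, that minor is a multiple of
   F (lam_m) = a b c / lam_m - (a^2 + b^2 c). Thus det C0 is a positive constant times
   e^((lam_0+lam_2)L) beta_02 + e^((lam_0+lam_1)L) beta_01 + e^((lam_1+lam_2)L) beta_12.
   For L >= 0 these exponentials decrease in this order, and the partial sums beta_02,
   beta_02 + beta_01 and beta_02 + beta_01 + beta_12 = -a b (lam_0-lam_1)(lam_0-lam_2)(lam_1-lam_2)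
   are all positive, so Abel summation gives det C0 > 0. *)

lemma sum_0_to_2: "(\<Sum>k=0..2. f k) = f 0 + f 1 + f 2" for f :: "nat \<Rightarrow> 'a::comm_monoid_add"
  by (simp add: numeral_2_eq_2 add.assoc)

lemma p3_vieta:
  fixes a b c x y z :: real
  assumes "x \<noteq> y" "x \<noteq> z" "y \<noteq> z"
    and "p3 a b c x = 0" "p3 a b c y = 0" "p3 a b c z = 0"
  shows "x + y + z = b" and "x * y * z = - c * b"
proof -
  have diff: "p3 a b c s - p3 a b c t = (s - t) * (s^2 + s*t + t^2 - b*(s + t) - (a + c))" for s t
    unfolding p3_def by (simp add: algebra_simps power2_eq_square power3_eq_cube)
  have sxy: "x^2 + x*y + y^2 - b*(x + y) = a + c" and sxz: "x^2 + x*z + z^2 - b*(x + z) = a + c"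
    using diff[of x y] diff[of x z] assms by simp_all
  have "(y - z) * (x + y + z - b) = 0"
    using sxy sxz by (simp add: algebra_simps power2_eq_square)
  then show sum_eq: "x + y + z = b" using assms(3) by simp
  have ac: "a + c = - (x*y + x*z + y*z)"
    using sxy unfolding sum_eq[symmetric] by (simp add: algebra_simps power2_eq_square)
  have "p3 a b c x = x^3 - (x + y + z) * x^2 + (x*y + x*z + y*z) * x + c * b"
    unfolding p3_def ac sum_eq by (simp add: algebra_simps)
  also have "\<dots> = x * y * z + c * b"
    by (simp add: algebra_simps power2_eq_square power3_eq_cube)
  finally have "p3 a b c x = x * y * z + c * b" .
  then show "x * y * z = - c * b" using assms(4) by simp
qed

definition mixed_minor ::
    "(nat \<Rightarrow> 'a::comm_ring) \<Rightarrow> (nat \<Rightarrow> 'a) \<Rightarrow> (nat \<Rightarrow> 'a) \<Rightarrow> (nat \<Rightarrow> 'a) \<Rightarrow> nat \<Rightarrow> nat \<Rightarrow> 'a"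
  where
  "mixed_minor u v w t i j = u i * t j + u j * t i - v i * w j - v j * w i"

lemma det_sum3_eq_mixed_minors:
  fixes \<alpha> u v w t :: "nat \<Rightarrow> 'a::comm_ring_1"
  assumes "\<And>k. k \<le> 2 \<Longrightarrow> u k * t k = v k * w k"
  shows "det (vector [vector [\<Sum>k=0..2. \<alpha> k * u k, \<Sum>k=0..2. \<alpha> k * v k],
                      vector [\<Sum>k=0..2. \<alpha> k * w k, \<Sum>k=0..2. \<alpha> k * t k]] :: 'a^2^2)
       = \<alpha> 0 * \<alpha> 1 * mixed_minor u v w t 0 1 + \<alpha> 0 * \<alpha> 2 * mixed_minor u v w t 0 2
         + \<alpha> 1 * \<alpha> 2 * mixed_minor u v w t 1 2"
proof -
  have "\<alpha> k * u k * (\<alpha> k * t k) = \<alpha> k * v k * (\<alpha> k * w k)" if "k \<le> 2" for k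
    using assms[OF that] by (metis mult.commute mult.left_commute)
  from this[of 0] this[of 1] this[of 2] show ?thesis
    unfolding det_2 mixed_minor_def sum_0_to_2 by (simp add: algebra_simps)
qed

definition pair_minor_factor :: "real \<Rightarrow> real \<Rightarrow> real \<Rightarrow> real \<Rightarrow> real" where
  "pair_minor_factor a b c m = a * b * c / m - (a^2 + b^2 * c)"

lemma p3_mixed_minor:
  fixes a b c u w m :: real
  assumes sum_eq: "u + w + m = b" and prod_eq: "u * w * m = - c * b" and root: "p3 a b c m = 0"
    and "b \<noteq> 0" "c \<noteq> 0" "u \<noteq> b" "w \<noteq> b"
  shows "u^2 / (b - u) * ((a + b*w) * (b - w) / w) + w^2 / (b - w) * ((a + b*u) * (b - u) / u)
           - u * (a + b*w) - w * (a + b*u)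
       = - b * (u - w)^2 * pair_minor_factor a b c m / (c * (b - u) * (b - w))"
proof -
  have nz: "u \<noteq> 0" "w \<noteq> 0" "m \<noteq> 0" "b - u \<noteq> 0" "b - w \<noteq> 0"
    using prod_eq assms(4-7) by auto
  let ?S = "a * b * (u + w) + (b^2 - a) * u * w"
  have lhs: "u^2 / (b - u) * ((a + b*w) * (b - w) / w) + w^2 / (b - w) * ((a + b*u) * (b - u) / u)
           - u * (a + b*w) - w * (a + b*u) = b * (u - w)^2 * ?S / ((b - u) * (b - w) * (u * w))"
    using nz by (simp add: divide_simps) (simp add: algebra_simps power2_eq_square)
  have "?S * m^2 = a * b * (u + w) * m^2 + (b^2 - a) * (u * w * m) * m"
    by (simp add: algebra_simps power2_eq_square)
  also have "\<dots> = a * b * (b - m) * m^2 - (b^2 - a) * c * b * m"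
    unfolding prod_eq using sum_eq by (simp add: algebra_simps flip: sum_eq)
  also have "\<dots> = b * (a * b * c - m * (a^2 + b^2 * c)) - a * b * p3 a b c m"
    unfolding p3_def by (simp add: algebra_simps power2_eq_square power3_eq_cube)
  finally have S_m: "?S * m = b * pair_minor_factor a b c m"
    using root nz by (simp add: pair_minor_factor_def field_simps power2_eq_square)
  have "?S / (u * w) = ?S * m / (u * w * m)"
    using nz by simp
  also have "\<dots> = - pair_minor_factor a b c m / c"
    unfolding S_m prod_eq using assms(4) by simp
  finally have ratio: "?S / (u * w) = - pair_minor_factor a b c m / c" .
  have "b * (u - w)^2 * ?S / ((b - u) * (b - w) * (u * w))
      = b * (u - w)^2 / ((b - u) * (b - w)) * (?S / (u * w))"
    by simp
  then show ?thesis
    unfolding lhs ratio by simp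
qed

lemma weighted_sum3_pos:
  fixes e1 e2 e3 p q r :: "'a::linordered_idom"
  assumes "e2 \<le> e1" "e3 \<le> e2" "0 < e3" "0 < p" "0 < p + q" "0 < p + q + r"
  shows "0 < e1 * p + e2 * q + e3 * r"
proof -
  have "e1 * p + e2 * q + e3 * r = (e1 - e2) * p + (e2 - e3) * (p + q) + e3 * (p + q + r)"
    by (simp add: algebra_simps)
  moreover have "0 \<le> (e1 - e2) * p" "0 \<le> (e2 - e3) * (p + q)" "0 < e3 * (p + q + r)"
    using assms by simp_all
  ultimately show ?thesis by linarith
qed

(* x, y, z stand for lam 0, lam 1, lam 2. *)
locale p3_ordered_roots =
  fixes a b c x y z :: real
  assumes a_pos: "0 < a" and b_pos: "0 < b" and c_pos: "0 < c"
    and root_x: "p3 a b c x = 0" and root_y: "p3 a b c y = 0" and root_z: "p3 a b c z = 0"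
    and z_pos: "0 < z" and z_lt_b: "z < b" and b_lt_x: "b < x" and y_plus_z_neg: "y + z < 0"
begin

abbreviation F :: "real \<Rightarrow> real" where "F \<equiv> pair_minor_factor a b c"

lemma y_neg: "y < 0"
  using z_pos y_plus_z_neg by linarith

lemma z_lt_x: "z < x"
  using z_lt_b b_lt_x by linarith

lemma roots_sum: "x + y + z = b" and roots_prod: "x * y * z = - c * b"
  using p3_vieta[OF _ _ _ root_x root_y root_z] y_neg z_pos z_lt_x by auto

lemma x_plus_y_pos: "0 < x + y"
  using roots_sum z_lt_b by linarith

lemma squares_order: "z^2 < y^2" "y^2 < x^2" "z^2 < x^2"
proof -
  have "z^2 < (- y)^2"
    by (rule power_strict_mono) (use z_pos y_plus_z_neg in auto)
  moreover have "(- y)^2 < x^2"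
    by (rule power_strict_mono) (use x_plus_y_pos y_neg in auto)
  ultimately show "z^2 < y^2" "y^2 < x^2" "z^2 < x^2" by simp_all
qed

lemma coeff_02_pos: "0 < (z^2 - x^2) * F y"
proof -
  have "z^2 < x^2" by (rule squares_order)
  moreover have "a * b * c / y < 0" "0 < a^2 + b^2 * c"
    using a_pos b_pos c_pos y_neg by (simp_all add: divide_pos_neg add_pos_pos)
  then have "F y < 0" by (simp add: pair_minor_factor_def)
  ultimately show ?thesis by (simp add: mult_neg_neg)
qed

lemma coeff_02_01_pos: "0 < (z^2 - x^2) * F y + (x^2 - y^2) * F z"
proof -
  have "(z^2 - x^2) * F y + (x^2 - y^2) * F z
      = a * b * c * ((z^2 - x^2) / y + (x^2 - y^2) / z) + (a^2 + b^2 * c) * (y^2 - z^2)"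
    by (simp add: pair_minor_factor_def algebra_simps diff_divide_distrib)
  moreover have "0 < a * b * c * ((z^2 - x^2) / y + (x^2 - y^2) / z)"
    using a_pos b_pos c_pos y_neg z_pos squares_order
    by (intro mult_pos_pos add_pos_pos divide_neg_neg divide_pos_pos) simp_all
  moreover have "0 < (a^2 + b^2 * c) * (y^2 - z^2)"
    using a_pos b_pos c_pos squares_order by (intro mult_pos_pos add_pos_pos) simp_all
  ultimately show ?thesis by linarith
qed

lemma coeff_sum_eq:
  "(z^2 - x^2) * F y + (x^2 - y^2) * F z + (y^2 - z^2) * F x
    = - a * b * ((x - y) * (x - z) * (y - z))"
proof -
  have "x \<noteq> 0" "y \<noteq> 0" "z \<noteq> 0" using z_pos z_lt_x y_neg by auto
  then have "(z^2 - x^2) * F y + (x^2 - y^2) * F z + (y^2 - z^2) * F x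
      = a * b * c * ((x - y) * (x - z) * (y - z) * (x + y + z)) / (x * y * z)"
    by (simp add: pair_minor_factor_def field_simps) (simp add: algebra_simps power2_eq_square)
  then show ?thesis
    unfolding roots_sum roots_prod using b_pos c_pos by simp
qed

lemma vandermonde_neg: "(x - y) * (x - z) * (y - z) < 0"
proof -
  have "0 < (x - y) * (x - z)" using z_lt_x y_neg z_pos by simp
  then show ?thesis using y_neg z_pos by (simp add: mult_pos_neg)
qed

lemma coeff_sum_pos: "0 < (z^2 - x^2) * F y + (x^2 - y^2) * F z + (y^2 - z^2) * F x"
  unfolding coeff_sum_eq using vandermonde_neg a_pos b_pos by (simp add: mult_pos_neg)

lemma det_C0_eq:
  assumes lam: "lam 0 = x" "lam 1 = y" "lam 2 = z"
  shows "det (C0 a b lam L)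
    = b * ((x - y) * (x - z) * (y - z)) / (c * ((x + y) * (y + z) * (x + z)))
      * (exp ((x + z) * L) * ((z^2 - x^2) * F y) + exp ((x + y) * L) * ((x^2 - y^2) * F z)
         + exp ((y + z) * L) * ((y^2 - z^2) * F x))"
proof -
  define \<alpha> where "\<alpha> k = (-1)^k * dminus lam k * exp (lam k * L)" for k
  define u where "u k = lam k ^ 2 / dplus lam k" for k
  define w where "w k = a + b * lam k" for k
  define t where "t k = (a + b * lam k) * dplus lam k / lam k" for k
  have lam_Suc: "lam (Suc 0) = y" using lam by simp
  have sums: "y + z = b - x" "x + z = b - y" "x + y = b - z" using roots_sum by linarith+
  have dplus: "dplus lam 0 = b - x" "dplus lam 1 = b - y" "dplus lam 2 = b - z"
    using sums by (simp_all add: dplus_def lam lam_Suc)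
  have C0_eq: "C0 a b lam L = vector [vector [\<Sum>k=0..2. \<alpha> k * u k, \<Sum>k=0..2. \<alpha> k * lam k],
                                      vector [\<Sum>k=0..2. \<alpha> k * w k, \<Sum>k=0..2. \<alpha> k * t k]]"
    unfolding C0_def \<alpha>_def u_def w_def t_def by (simp add: mult_ac)
  have diagonal: "u k * t k = lam k * w k" if "k \<le> 2" for k
  proof -
    have "k = 0 \<or> k = 1 \<or> k = 2" using that by auto
    then have "lam k \<noteq> 0 \<and> dplus lam k \<noteq> 0"
      using dplus lam z_pos z_lt_b b_lt_x y_neg by auto
    then show ?thesis by (simp add: u_def t_def w_def power2_eq_square)
  qed
  have m01: "mixed_minor u lam w t 0 1 = - b * (x - y)^2 * F z / (c * (b - x) * (b - y))"
    unfolding mixed_minor_def u_def t_def w_def dplus lam lam_Suc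
    by (rule p3_mixed_minor)
      (use roots_sum roots_prod root_z b_pos c_pos b_lt_x x_plus_y_pos z_pos in auto)
  have m02: "mixed_minor u lam w t 0 2 = - b * (x - z)^2 * F y / (c * (b - x) * (b - z))"
    unfolding mixed_minor_def u_def t_def w_def dplus lam lam_Suc
    by (rule p3_mixed_minor)
      (use roots_sum roots_prod root_y b_pos c_pos b_lt_x z_lt_b in \<open>auto simp: algebra_simps\<close>)
  have m12: "mixed_minor u lam w t 1 2 = - b * (y - z)^2 * F x / (c * (b - y) * (b - z))"
    unfolding mixed_minor_def u_def t_def w_def dplus lam lam_Suc
    by (rule p3_mixed_minor)
      (use roots_sum roots_prod root_x b_pos c_pos y_neg z_lt_b in \<open>auto simp: algebra_simps\<close>)
  have \<alpha>: "\<alpha> 0 = (y - z) * exp (x * L)" "\<alpha> 1 = - ((x - z) * exp (y * L))"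
    "\<alpha> 2 = (x - y) * exp (z * L)"
    by (simp_all add: \<alpha>_def dminus_def lam lam_Suc algebra_simps)
  have "det (C0 a b lam L) = \<alpha> 0 * \<alpha> 1 * mixed_minor u lam w t 0 1
      + \<alpha> 0 * \<alpha> 2 * mixed_minor u lam w t 0 2 + \<alpha> 1 * \<alpha> 2 * mixed_minor u lam w t 1 2"
    unfolding C0_eq by (rule det_sum3_eq_mixed_minors[OF diagonal])
  moreover have "c \<noteq> 0" "x + y \<noteq> 0" "y + z \<noteq> 0" "x + z \<noteq> 0"
    using c_pos y_plus_z_neg x_plus_y_pos z_lt_x z_pos by linarith+
  moreover have "exp ((s + s') * L) = exp (s * L) * exp (s' * L)" for s s'
    by (simp add: distrib_right exp_add)
  ultimately show ?thesis
    unfolding m01 m02 m12 \<alpha> sums[symmetric]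
    by (simp add: divide_simps) (simp add: algebra_simps power2_eq_square)
qed

lemma det_C0_pos:
  assumes "lam 0 = x" "lam 1 = y" "lam 2 = z" and "0 \<le> L"
  shows "0 < det (C0 a b lam L)"
proof -
  have "(x + y) * (y + z) * (x + z) < 0"
    using x_plus_y_pos y_plus_z_neg z_lt_x z_pos by (simp add: mult_pos_neg mult_neg_pos)
  then have "c * ((x + y) * (y + z) * (x + z)) < 0"
    using c_pos by (simp add: mult_pos_neg)
  with mult_pos_neg[OF b_pos vandermonde_neg]
  have scale: "0 < b * ((x - y) * (x - z) * (y - z)) / (c * ((x + y) * (y + z) * (x + z)))"
    by (rule divide_neg_neg)
  have "(x + y) * L \<le> (x + z) * L" "(y + z) * L \<le> (x + y) * L"
    using \<open>0 \<le> L\<close> y_neg z_pos z_lt_x by (simp_all add: mult_right_mono)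
  then have "0 < exp ((x + z) * L) * ((z^2 - x^2) * F y) + exp ((x + y) * L) * ((x^2 - y^2) * F z)
              + exp ((y + z) * L) * ((y^2 - z^2) * F x)"
    by (intro weighted_sum3_pos[OF _ _ _ coeff_02_pos coeff_02_01_pos coeff_sum_pos]) simp_all
  with scale show ?thesis
    unfolding det_C0_eq[OF assms(1-3)] by (rule mult_pos_pos)
qed

end

theorem lemma1:
  fixes a b c :: real and lam :: "nat \<Rightarrow> real"
  assumes "a > 0" and "b > 0" and "c > 0"
    and "p3 a b c (lam 0) = 0" and "p3 a b c (lam 1) = 0" and "p3 a b c (lam 2) = 0"
    and "lam 0 > max b (sqrt c)"
    and "lam 1 < - sqrt c"
    and "0 < lam 2" and "lam 2 < min b (sqrt c)"
  shows "\<forall>L::real. L \<ge> 0 \<longrightarrow>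
           det (C0 a b lam L) > 0 \<and> (\<forall>\<gamma>::real. \<exists>!s::real^2. C0 a b lam L *v s = rhs a c lam \<gamma>)"
proof (intro allI impI)
  fix L :: real
  assume "0 \<le> L"
  interpret p3_ordered_roots a b c "lam 0" "lam 1" "lam 2"
    using assms by unfold_locales auto
  have det: "0 < det (C0 a b lam L)"
    using det_C0_pos \<open>0 \<le> L\<close> by simp
  then have "\<exists>!s. C0 a b lam L *v s = rhs a c lam \<gamma>" for \<gamma>
    by (simp add: cramer)
  with det show "0 < det (C0 a b lam L) \<and> (\<forall>\<gamma>. \<exists>!s. C0 a b lam L *v s = rhs a c lam \<gamma>)"
    by blast
qed

end
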